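(* Let $\phi$ be the standard Gaussian density, $h$ a probability density on $\mathbb R$ that is symmetric, positive and decreasing on $[0,\infty)$, $m\ge0$ and $c_0>0$. There exists $c>0$ depending only on $h,m,c_0$ such that for all $n\ge1$, $\sigma>0$ and real numbers $X$, $x\ge0$ with $|X|\le x$ and $\sigma\le c_0x$, $$\int_{\mathbb R}|\theta|^m\,\phi(\sqrt n(X-\theta))\,h(\theta/\sigma)\,d\theta\ \ge\ c\,\sigma^{m+1}\phi(\sqrt n\,x).$$ *)

theory Defs
  imports "HOL-Probability.Probability"
begin

definition prob_density_real :: "(real \<Rightarrow> real) \<Rightarrow> bool" where
  "prob_density_real h \<longleftrightarrow> h \<in> borel_measurable borel \<and> (\<forall>t. 0 \<le> h t)
     \<and> integrable lborel h \<and> (\<integral>t. h t \<partial>lborel) = 1"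

end

(*
  Put d = sigma / c0, so that 0 < d <= x. On the side of the origin where X lies, the points t
  with d/2 <= |t| <= d form an interval of length d/2 on which |X - t| <= x. Since the Gaussian
  density and h both decrease in the absolute value of their argument, the integrand there is at
  least (d/2)^m * phi(sqrt n * x) * h(1/c0), which gives the bound with c = h(1/c0) / (2 c0)^(m+1).
  Integrability follows from phi(sqrt n * u) <= phi(u), the boundedness of h by h(0) and the
  finiteness of the absolute moments of the normal distribution.
*)

theory Submission
  imports Defs
begin

lemma integral_ge_of_lower_bound_on_interval:
  fixes f :: "real \<Rightarrow> real"
  assumes f: "integrable lborel f" and nonneg: "\<And>t. 0 \<le> f t"
    and bound: "\<And>t. t \<in> {a..b} \<Longrightarrow> C \<le> f t" and "a \<le> b"
  shows "C * (b - a) \<le> (\<integral>t. f t \<partial>lborel)"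
proof -
  have "C * (b - a) = (\<integral>t. C * indicator {a..b} t \<partial>lborel)"
    using \<open>a \<le> b\<close> by simp
  also have "\<dots> \<le> (\<integral>t. f t \<partial>lborel)"
    using borel_integrable_atLeastAtMost[of a b "\<lambda>_. C"]
    by (intro integral_mono f) (auto simp: indicator_def nonneg bound)
  finally show ?thesis .
qed

lemma power_add_le_two_power:
  fixes a b :: real
  assumes "0 \<le> a" "0 \<le> b"
  shows "(a + b) ^ k \<le> 2 ^ k * (a ^ k + b ^ k)"
proof -
  have "(a + b) ^ k \<le> (2 * max a b) ^ k"
    using assms by (intro power_mono) auto
  also have "\<dots> = 2 ^ k * max a b ^ k"
    by (simp add: power_mult_distrib)
  also have "\<dots> \<le> 2 ^ k * (a ^ k + b ^ k)"
    using assms by (auto simp: max_def)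
  finally show ?thesis .
qed

lemma abs_powr_le_one_plus_power_ceiling:
  fixes t m :: real
  assumes "0 \<le> m"
  shows "\<bar>t\<bar> powr m \<le> 1 + \<bar>t\<bar> ^ nat \<lceil>m\<rceil>"
proof (cases "\<bar>t\<bar> \<le> 1")
  case True
  then have "\<bar>t\<bar> powr m \<le> 1"
    using assms by (intro powr_le1) auto
  then show ?thesis
    by (simp add: add_increasing2)
next
  case False
  then have "\<bar>t\<bar> powr m \<le> \<bar>t\<bar> powr (nat \<lceil>m\<rceil>)"
    by (intro powr_mono) (auto simp: real_nat_ceiling_ge)
  also have "\<dots> = \<bar>t\<bar> ^ nat \<lceil>m\<rceil>"
    using False by (simp add: powr_realpow)
  finally show ?thesis by simp
qed

lemma integrable_abs_powr_normal_density:
  fixes m :: real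
  assumes "0 \<le> m" and "0 < \<sigma>"
  shows "integrable lborel (\<lambda>\<theta>. \<bar>\<theta>\<bar> powr m * normal_density \<mu> \<sigma> \<theta>)"
proof -
  define k where "k = nat \<lceil>m\<rceil>"
  let ?p = "normal_density \<mu> \<sigma>"
  have "integrable lborel
      (\<lambda>\<theta>. ?p \<theta> + 2 ^ k * (?p \<theta> * \<bar>\<theta> - \<mu>\<bar> ^ k) + 2 ^ k * \<bar>\<mu>\<bar> ^ k * ?p \<theta>)"
    by (intro Bochner_Integration.integrable_add integrable_mult_right
        integrable_normal_moment_abs integrable_normal_density \<open>0 < \<sigma>\<close>)
  then show ?thesis
  proof (rule Bochner_Integration.integrable_bound)
    show "AE \<theta> in lborel. norm (\<bar>\<theta>\<bar> powr m * ?p \<theta>)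
        \<le> norm (?p \<theta> + 2 ^ k * (?p \<theta> * \<bar>\<theta> - \<mu>\<bar> ^ k) + 2 ^ k * \<bar>\<mu>\<bar> ^ k * ?p \<theta>)"
    proof (rule AE_I2)
      fix \<theta> :: real
      have "\<bar>\<theta>\<bar> ^ k \<le> (\<bar>\<theta> - \<mu>\<bar> + \<bar>\<mu>\<bar>) ^ k"
        by (intro power_mono) auto
      also have "\<dots> \<le> 2 ^ k * (\<bar>\<theta> - \<mu>\<bar> ^ k + \<bar>\<mu>\<bar> ^ k)"
        by (intro power_add_le_two_power) auto
      finally have "\<bar>\<theta>\<bar> powr m \<le> 1 + 2 ^ k * (\<bar>\<theta> - \<mu>\<bar> ^ k + \<bar>\<mu>\<bar> ^ k)"
        using abs_powr_le_one_plus_power_ceiling[OF \<open>0 \<le> m\<close>, of \<theta>] unfolding k_def by linarith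
      then have "\<bar>\<theta>\<bar> powr m * ?p \<theta> \<le> (1 + 2 ^ k * (\<bar>\<theta> - \<mu>\<bar> ^ k + \<bar>\<mu>\<bar> ^ k)) * ?p \<theta>"
        by (intro mult_right_mono) auto
      then show "norm (\<bar>\<theta>\<bar> powr m * ?p \<theta>)
          \<le> norm (?p \<theta> + 2 ^ k * (?p \<theta> * \<bar>\<theta> - \<mu>\<bar> ^ k) + 2 ^ k * \<bar>\<mu>\<bar> ^ k * ?p \<theta>)"
        by (simp add: algebra_simps)
    qed
  qed (simp add: normal_density_def)
qed

lemma std_normal_density_abs_antimono:
  assumes "\<bar>u\<bar> \<le> \<bar>v\<bar>"
  shows "std_normal_density v \<le> std_normal_density u"
proof -
  have "u\<^sup>2 \<le> v\<^sup>2"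
    using assms by (simp add: abs_le_square_iff)
  then show ?thesis
    by (simp add: normal_density_def divide_right_mono)
qed

lemma integrable_abs_powr_std_normal_density_bounded:
  fixes g :: "real \<Rightarrow> real" and a m X :: real
  assumes g: "g \<in> borel_measurable borel" "\<And>t. \<bar>g t\<bar> \<le> G"
    and a: "1 \<le> \<bar>a\<bar>" and m: "0 \<le> m"
  shows "integrable lborel (\<lambda>\<theta>. \<bar>\<theta>\<bar> powr m * std_normal_density (a * (X - \<theta>)) * g \<theta>)"
proof (rule Bochner_Integration.integrable_bound)
  show "integrable lborel (\<lambda>\<theta>. G * (\<bar>\<theta>\<bar> powr m * normal_density X 1 \<theta>))"
    using integrable_abs_powr_normal_density[OF m zero_less_one] by (rule integrable_mult_right)
  show "(\<lambda>\<theta>. \<bar>\<theta>\<bar> powr m * std_normal_density (a * (X - \<theta>)) * g \<theta>) \<in> borel_measurable lborel"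
    using g(1) by (simp add: normal_density_def) measurable
  show "AE \<theta> in lborel. norm (\<bar>\<theta>\<bar> powr m * std_normal_density (a * (X - \<theta>)) * g \<theta>)
      \<le> norm (G * (\<bar>\<theta>\<bar> powr m * normal_density X 1 \<theta>))"
  proof (rule AE_I2)
    fix \<theta> :: real
    have "std_normal_density (a * (X - \<theta>)) \<le> std_normal_density (\<theta> - X)"
      using mult_right_mono[OF a, of "\<bar>X - \<theta>\<bar>"]
      by (intro std_normal_density_abs_antimono) (simp add: abs_mult abs_minus_commute)
    then have "std_normal_density (a * (X - \<theta>)) \<le> normal_density X 1 \<theta>"
      by (simp add: normal_density_def)
    then have "\<bar>\<theta>\<bar> powr m * std_normal_density (a * (X - \<theta>)) * \<bar>g \<theta>\<bar>
        \<le> \<bar>\<theta>\<bar> powr m * normal_density X 1 \<theta> * G"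
      using g(2)[of \<theta>] by (intro mult_mono mult_left_mono) auto
    moreover have "0 \<le> G"
      using g(2)[of 0] by linarith
    ultimately show "norm (\<bar>\<theta>\<bar> powr m * std_normal_density (a * (X - \<theta>)) * g \<theta>)
        \<le> norm (G * (\<bar>\<theta>\<bar> powr m * normal_density X 1 \<theta>))"
      by (simp add: abs_mult mult_ac)
  qed
qed

lemma symmetric_decreasing_abs_antimono:
  fixes h :: "real \<Rightarrow> real"
  assumes symm: "\<And>t. h (- t) = h t"
    and decr: "\<And>s t. 0 \<le> s \<Longrightarrow> s \<le> t \<Longrightarrow> h t \<le> h s"
    and "\<bar>s\<bar> \<le> \<bar>t\<bar>"
  shows "h t \<le> h s"
proof -
  have "h \<bar>t\<bar> \<le> h \<bar>s\<bar>"
    using decr \<open>\<bar>s\<bar> \<le> \<bar>t\<bar>\<close> by simp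
  moreover have "h \<bar>r\<bar> = h r" for r
    using symm[of r] by (cases "0 \<le> r") auto
  ultimately show ?thesis
    by simp
qed

lemma same_side_interval_near_origin:
  fixes d x X :: real
  assumes "0 < d" "d \<le> x" "\<bar>X\<bar> \<le> x"
  obtains b where "\<And>t. t \<in> {b..b + d / 2} \<Longrightarrow> d / 2 \<le> \<bar>t\<bar> \<and> \<bar>t\<bar> \<le> d \<and> \<bar>X - t\<bar> \<le> x"
proof (cases "0 \<le> X")
  case True
  then show ?thesis
    using assms by (intro that[of "d / 2"]) auto
next
  case False
  then show ?thesis
    using assms by (intro that[of "- d"]) auto
qed

lemma integral_abs_powr_normal_kernel_lower_bound:
  fixes h :: "real \<Rightarrow> real" and a m c\<^sub>0 \<sigma> X x :: real
  assumes h: "h \<in> borel_measurable borel" "\<And>t. 0 \<le> h t"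
    and symm: "\<And>t. h (- t) = h t"
    and decr: "\<And>s t. 0 \<le> s \<Longrightarrow> s \<le> t \<Longrightarrow> h t \<le> h s"
    and a: "1 \<le> \<bar>a\<bar>" and m: "0 \<le> m" and c0: "0 < c\<^sub>0"
    and \<sigma>: "0 < \<sigma>" "\<sigma> \<le> c\<^sub>0 * x" and X: "\<bar>X\<bar> \<le> x"
  shows "h (1 / c\<^sub>0) * (\<sigma> / (2 * c\<^sub>0)) powr (m + 1) * std_normal_density (a * x)
    \<le> (\<integral>\<theta>. \<bar>\<theta>\<bar> powr m * std_normal_density (a * (X - \<theta>)) * h (\<theta> / \<sigma>) \<partial>lborel)"
proof -
  define d where "d = \<sigma> / c\<^sub>0"
  define C where "C = (d / 2) powr m * std_normal_density (a * x) * h (1 / c\<^sub>0)"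
  have d: "0 < d" "d \<le> x"
    using \<sigma> c0 by (auto simp: d_def pos_divide_le_eq mult.commute)
  then obtain b where b: "\<And>t. t \<in> {b..b + d / 2} \<Longrightarrow> d / 2 \<le> \<bar>t\<bar> \<and> \<bar>t\<bar> \<le> d \<and> \<bar>X - t\<bar> \<le> x"
    using same_side_interval_near_origin X by blast
  have "C * (b + d / 2 - b)
      \<le> (\<integral>\<theta>. \<bar>\<theta>\<bar> powr m * std_normal_density (a * (X - \<theta>)) * h (\<theta> / \<sigma>) \<partial>lborel)"
  proof (rule integral_ge_of_lower_bound_on_interval)
    show "integrable lborel (\<lambda>\<theta>. \<bar>\<theta>\<bar> powr m * std_normal_density (a * (X - \<theta>)) * h (\<theta> / \<sigma>))"
      using h symmetric_decreasing_abs_antimono[where h = h, OF symm decr, of 0]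
      by (intro integrable_abs_powr_std_normal_density_bounded[OF _ _ a m, where G = "h 0"]) auto
    fix t assume t: "t \<in> {b..b + d / 2}"
    have "(d / 2) powr m \<le> \<bar>t\<bar> powr m"
      using b[OF t] d m by (intro powr_mono2) auto
    moreover have "std_normal_density (a * x) \<le> std_normal_density (a * (X - t))"
      using b[OF t] d by (intro std_normal_density_abs_antimono) (simp add: abs_mult mult_left_mono)
    moreover have "h (1 / c\<^sub>0) \<le> h (t / \<sigma>)"
    proof (rule symmetric_decreasing_abs_antimono[where h = h, OF symm decr])
      show "\<bar>t / \<sigma>\<bar> \<le> \<bar>1 / c\<^sub>0\<bar>"
        using b[OF t] \<sigma> c0 by (simp add: d_def abs_divide field_simps)
    qed
    ultimately show "C \<le> \<bar>t\<bar> powr m * std_normal_density (a * (X - t)) * h (t / \<sigma>)"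
      unfolding C_def using h(2) by (intro mult_mono) auto
  qed (use h(2) d in auto)
  moreover have "C * (b + d / 2 - b) = h (1 / c\<^sub>0) * (d / 2) powr (m + 1) * std_normal_density (a * x)"
    using d by (simp add: C_def powr_add mult_ac)
  moreover have "d / 2 = \<sigma> / (2 * c\<^sub>0)"
    by (simp add: d_def)
  ultimately show ?thesis
    by simp
qed

theorem mainTheorem6:
  fixes h :: "real \<Rightarrow> real" and m c\<^sub>0 :: real
  assumes dens: "prob_density_real h"
    and symm: "\<And>t. h (- t) = h t"
    and pos: "\<And>t. h t > 0"
    and decr: "\<And>s t. 0 \<le> s \<Longrightarrow> s \<le> t \<Longrightarrow> h t \<le> h s"
    and m: "m \<ge> 0"
    and c0: "c\<^sub>0 > 0"
  shows "\<exists>c>0. \<forall>(n::nat) \<sigma> X x. n \<ge> 1 \<longrightarrow> \<sigma> > 0 \<longrightarrow> x \<ge> 0 \<longrightarrow> \<bar>X\<bar> \<le> x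
            \<longrightarrow> \<sigma> \<le> c\<^sub>0 * x \<longrightarrow>
           (\<integral>\<theta>. \<bar>\<theta>\<bar> powr m * std_normal_density (sqrt (real n) * (X - \<theta>)) * h (\<theta> / \<sigma>) \<partial>lborel)
             \<ge> c * \<sigma> powr (m + 1) * std_normal_density (sqrt (real n) * x)"
proof -
  have h: "h \<in> borel_measurable borel" "\<And>t. 0 \<le> h t"
    using dens unfolding prob_density_real_def by auto
  define c where "c = h (1 / c\<^sub>0) / (2 * c\<^sub>0) powr (m + 1)"
  have "c > 0"
    using pos c0 by (simp add: c_def)
  moreover have "c * \<sigma> powr (m + 1) * std_normal_density (sqrt (real n) * x)
      \<le> (\<integral>\<theta>. \<bar>\<theta>\<bar> powr m * std_normal_density (sqrt (real n) * (X - \<theta>)) * h (\<theta> / \<sigma>) \<partial>lborel)"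
    if "n \<ge> 1" "\<sigma> > 0" "\<bar>X\<bar> \<le> x" "\<sigma> \<le> c\<^sub>0 * x" for n :: nat and \<sigma> X x :: real
  proof -
    have "c * \<sigma> powr (m + 1) = h (1 / c\<^sub>0) * (\<sigma> / (2 * c\<^sub>0)) powr (m + 1)"
      using that c0 by (simp add: c_def powr_divide)
    moreover have "1 \<le> \<bar>sqrt (real n)\<bar>"
      using that by simp
    ultimately show ?thesis
      using integral_abs_powr_normal_kernel_lower_bound[OF h symm decr _ m c0] that by simp
  qed
  ultimately show ?thesis
    by blast
qed

end
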